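(* Define $b(n)$ by $\sum_{n\ge1}b(n)q^n=-q(q^2;q)_\infty$. Then for every positive integer $n$, $$b(n)=\begin{cases}0, & \text{if } R(\lceil n\rceil_p)\text{ is positive},\\ -1, & \text{if } R(\lceil n\rceil_p)\text{ is odd and negative},\\ 1, & \text{if } R(\lceil n\rceil_p)\text{ is even and negative}.\end{cases}$$
   Context: $(z;q)_\infty=\prod_{j\ge0}(1-zq^j)$. $\mathcal{P}=\{m(3m+1)/2:m\in\mathbb{Z}\}$ is the set of (generalized) pentagonal numbers; for $n=m(3m+1)/2\in\mathcal{P}$ put $R(n)=m$ (well defined). $\lceil n\rceil_p$ is the smallest element of $\mathcal{P}$ that is $\ge n$. *)

theory Defs
  imports "HOL-Computational_Algebra.Formal_Power_Series"
begin

definition pent :: "int \<Rightarrow> int" where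
  "pent m = m * (3 * m + 1) div 2"

definition pentagonals :: "int set" where
  "pentagonals = range pent"

definition R :: "int \<Rightarrow> int" where
  "R n = (THE m. pent m = n)"

definition ceil_p :: "int \<Rightarrow> int" where
  "ceil_p n = (LEAST k. k \<in> pentagonals \<and> n \<le> k)"

text \<open>Coefficients b(n) of -q (q^2;q)_infinity = -q prod_{j>=2}(1-q^j).
  The coefficient of q^n only depends on the factors with j \<le> n, so
  b(n) = - [q^(n-1)] prod_{j=2..n} (1 - q^j)  for n \<ge> 1, and b(0) = 0.\<close>
definition b :: "nat \<Rightarrow> int" where
  "b n = (if n = 0 then 0
          else - fps_nth (\<Prod>j\<in>{2..n}. (1 - fps_X ^ j :: int fps)) (n - 1))"

end

theory Submission
  imports Defs
begin

unbundle fps_syntax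

text \<open>
  The proof rests on Shanks' finite form of Euler's pentagonal number theorem,
  \<open>\<Sum>k\<le>n. (-1)\<^sup>k q\<^bsup>nk + k(k+1)/2\<^esup> (q\<^bsup>k+1\<^esup>;q)\<^bsub>n-k\<^esub> = \<Sum>|j|\<le>n. (-1)\<^sup>j q\<^bsup>j(3j+1)/2\<^esup>\<close>,
  which follows by telescoping in \<open>n\<close>. Every summand with \<open>k \<ge> 1\<close> is divisible by
  \<open>q\<^bsup>n+1\<^esup>\<close>, so \<open>(q;q)\<^sub>n\<close> agrees with the pentagonal sum up to \<open>q\<^sup>n\<close>.
  As \<open>(q;q)\<^sub>n = (1 - q) (q\<^sup>2;q)\<^sub>n\<close>, the coefficient of \<open>q\<^bsup>n-1\<^esup>\<close> in
  \<open>(q\<^sup>2;q)\<^sub>n\<close> is the sum of the signs \<open>(-1)\<^sup>j\<close> over all \<open>j\<close> with \<open>pent j < n\<close>, i.e. with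
  \<open>pent j < pent m\<close> where \<open>pent m = \<lceil>n\<rceil>\<^sub>p\<close>. These \<open>j\<close> form the interval \<open>[-m, m)\<close> if
  \<open>m \<ge> 0\<close> and \<open>(m, -m)\<close> if \<open>m < 0\<close>, whose sign sums are \<open>0\<close> and \<open>(-1)\<^bsup>m+1\<^esup>\<close>.
\<close>

lemma pent_double: "2 * pent j = j * (3 * j + 1)"
  unfolding pent_def by simp

lemma nat_pent_of_nat: "nat (pent (int k)) = k * k + k * (k + 1) div 2"
proof -
  define t where "t = k * (k + 1) div 2"
  have "int (2 * t) = int (k * (k + 1))"
    unfolding t_def by simp
  then have "2 * pent (int k) = 2 * int (k * k + t)"
    unfolding pent_double by (simp add: algebra_simps)
  then have "pent (int k) = int (k * k + t)"
    using mult_left_cancel[of "2::int"] by simp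
  then show ?thesis unfolding t_def by (simp only: nat_int)
qed

lemma nat_pent_uminus_of_nat: "nat (pent (- int k)) = (k - 1) * k + k * (k + 1) div 2"
proof -
  define t where "t = k * (k + 1) div 2"
  have "int (2 * t) = int (k * (k + 1))"
    unfolding t_def by simp
  then have "2 * pent (- int k) = 2 * int ((k - 1) * k + t)"
    unfolding pent_double by (cases k) (simp_all add: algebra_simps)
  then have "pent (- int k) = int ((k - 1) * k + t)"
    using mult_left_cancel[of "2::int"] by simp
  then show ?thesis unfolding t_def by (simp only: nat_int)
qed

lemma abs_le_pent: "\<bar>j\<bar> \<le> pent j"
proof -
  have "0 \<le> j * (3 * j - 1)" if "0 \<le> j"
    using that by (cases "j = 0") simp_all
  moreover have "0 \<le> j * (j + 1)" if "j < 0"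
    using that by (simp add: mult_nonpos_nonpos)
  ultimately have "2 * \<bar>j\<bar> \<le> j * (3 * j + 1)"
    by (cases "0 \<le> j") (simp_all add: algebra_simps)
  then show ?thesis using pent_double[of j] by linarith
qed

lemma pent_nonneg: "0 \<le> pent j"
  using abs_le_pent[of j] by linarith

lemma pent_diff: "2 * (pent j - pent m) = (j - m) * (3 * (j + m) + 1)"
  using pent_double[of j] pent_double[of m] by (simp add: algebra_simps)

lemma pent_less_pent_iff: "pent j < pent m \<longleftrightarrow> (j - m) * (3 * (j + m) + 1) < 0"
  unfolding pent_diff[symmetric] by simp

lemma pent_eq_iff: "pent j = pent m \<longleftrightarrow> j = m"
proof
  assume "pent j = pent m"
  then have "(j - m) * (3 * (j + m) + 1) = 0"
    unfolding pent_diff[symmetric] by simp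
  moreover have "3 * (j + m) + 1 \<noteq> 0" by presburger
  ultimately show "j = m" by simp
qed simp

lemma R_pent: "R (pent m) = m"
  unfolding R_def by (rule the_equality) (simp_all add: pent_eq_iff)

lemma pent_less_pent_iff_nonneg: "0 \<le> m \<Longrightarrow> pent j < pent m \<longleftrightarrow> - m \<le> j \<and> j < m"
  unfolding pent_less_pent_iff by (auto simp: mult_less_0_iff)

lemma pent_less_pent_iff_neg: "m < 0 \<Longrightarrow> pent j < pent m \<longleftrightarrow> m < j \<and> j < - m"
  unfolding pent_less_pent_iff by (auto simp: mult_less_0_iff; presburger)

lemma ceil_p_minimal:
  obtains m where "ceil_p n = pent m" "{j. pent j < pent m} = {j. pent j < n}"
proof -
  let ?P = "\<lambda>k. k \<in> pentagonals \<and> n \<le> k"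
  have "?P (pent n)"
    using abs_le_pent[of n] by (auto simp: pentagonals_def)
  then obtain c where c: "?P c" and c_min: "\<forall>k. ?P k \<longrightarrow> nat (c - n) \<le> nat (k - n)"
    using ex_has_least_nat[of ?P "pent n" "\<lambda>k. nat (k - n)"] by blast
  have least: "c \<le> k" if "?P k" for k
    using c_min[rule_format, OF that] that c by auto
  obtain m where m: "c = pent m"
    using c by (auto simp: pentagonals_def)
  show ?thesis
  proof (rule that)
    show "ceil_p n = pent m"
      unfolding ceil_p_def m[symmetric] by (rule Least_equality, rule c, erule least)
    have "pent j < pent m \<longleftrightarrow> pent j < n" for j
    proof -
      have "n \<le> pent j \<Longrightarrow> pent m \<le> pent j"
        using least[of "pent j"] unfolding m by (simp add: pentagonals_def)
      then show ?thesis using c unfolding m by linarith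
    qed
    then show "{j. pent j < pent m} = {j. pent j < n}"
      by simp
  qed
qed

definition qprod :: "nat \<Rightarrow> nat \<Rightarrow> 'a::comm_ring_1 fps" where
  "qprod k n = (\<Prod>i\<in>{k<..n}. 1 - fps_X ^ i)"

definition shanks_term :: "nat \<Rightarrow> nat \<Rightarrow> 'a::comm_ring_1 fps" where
  "shanks_term n k = (-1) ^ k * fps_X ^ (n * k + k * (k + 1) div 2) * qprod k n"

definition pentagonal_sum :: "nat \<Rightarrow> 'a::comm_ring_1 fps" where
  "pentagonal_sum n = (\<Sum>j\<in>{-int n..int n}. (-1) ^ nat \<bar>j\<bar> * fps_X ^ nat (pent j))"

lemma qprod_self [simp]: "qprod n n = 1"
  by (simp add: qprod_def)

lemma qprod_Suc_right: "k \<le> n \<Longrightarrow> qprod k (Suc n) = qprod k n * (1 - fps_X ^ Suc n)"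
proof -
  assume "k \<le> n"
  then have "{k<..Suc n} = insert (Suc n) {k<..n}" by auto
  then show ?thesis unfolding qprod_def by (simp add: mult.commute)
qed

lemma qprod_Suc_left: "k < n \<Longrightarrow> qprod k n = (1 - fps_X ^ Suc k) * qprod (Suc k) n"
proof -
  assume "k < n"
  then have "{k<..n} = insert (Suc k) {Suc k<..n}" by auto
  then show ?thesis unfolding qprod_def by simp
qed

lemma sum_shanks_term_diff:
  "m \<le> n \<Longrightarrow> (\<Sum>k\<le>m. shanks_term (Suc n) k - shanks_term n k :: 'a::comm_ring_1 fps)
     = (-1) ^ Suc m * fps_X ^ (n * Suc m + Suc m * (Suc m + 1) div 2) * qprod m n"
proof (induction m)
  case 0
  then show ?case
    by (simp add: shanks_term_def qprod_Suc_right algebra_simps)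
next
  case (Suc m)
  then have "m < n" by simp
  define e where "e = n * Suc m + Suc m * (Suc m + 1) div 2"
  define s :: "'a fps" where "s = (-1) ^ Suc m"
  define Q :: "'a fps" where "Q = qprod (Suc m) n"
  have exponent: "Suc n * Suc m + Suc m * (Suc m + 1) div 2 = e + Suc m"
    by (simp add: e_def)
  have exponent': "n * Suc (Suc m) + Suc (Suc m) * (Suc (Suc m) + 1) div 2 = e + Suc m + Suc n"
    by (simp add: e_def)
  have "shanks_term (Suc n) (Suc m) = s * fps_X ^ (e + Suc m) * (Q * (1 - fps_X ^ Suc n))"
    using \<open>m < n\<close> unfolding shanks_term_def s_def Q_def exponent by (simp add: qprod_Suc_right)
  moreover have "shanks_term n (Suc m) = s * fps_X ^ e * Q"
    unfolding shanks_term_def s_def Q_def e_def ..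
  ultimately have new_term: "shanks_term (Suc n) (Suc m) - shanks_term n (Suc m)
      = s * fps_X ^ e * Q * (fps_X ^ Suc m * (1 - fps_X ^ Suc n) - 1)"
    by (simp add: power_add algebra_simps)
  have "(\<Sum>k\<le>m. shanks_term (Suc n) k - shanks_term n k) = s * fps_X ^ e * ((1 - fps_X ^ Suc m) * Q)"
    using Suc.IH \<open>m < n\<close> unfolding s_def e_def Q_def qprod_Suc_left[OF \<open>m < n\<close>] by simp
  then have "(\<Sum>k\<le>Suc m. shanks_term (Suc n) k - shanks_term n k)
      = s * fps_X ^ e * ((1 - fps_X ^ Suc m) * Q)
        + (shanks_term (Suc n) (Suc m) - shanks_term n (Suc m))"
    by simp
  also have "\<dots> = - s * fps_X ^ (e + Suc m + Suc n) * Q"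
    unfolding new_term by (simp add: power_add algebra_simps)
  also have "\<dots> = (-1) ^ Suc (Suc m)
      * fps_X ^ (n * Suc (Suc m) + Suc (Suc m) * (Suc (Suc m) + 1) div 2) * qprod (Suc m) n"
    unfolding exponent' s_def Q_def by simp
  finally show ?case .
qed

lemma pentagonal_sum_Suc:
  "pentagonal_sum (Suc n) = pentagonal_sum n
     + (-1) ^ Suc n * fps_X ^ (Suc n * Suc n + Suc n * (Suc n + 1) div 2)
     + (-1) ^ Suc n * fps_X ^ (n * Suc n + Suc n * (Suc n + 1) div 2)"
proof -
  have "{-int (Suc n)..int (Suc n)} = insert (int (Suc n)) (insert (- int (Suc n)) {-int n..int n})"
    by auto
  then show ?thesis
    unfolding pentagonal_sum_def
    by (simp add: nat_pent_of_nat nat_pent_uminus_of_nat algebra_simps del: of_nat_Suc)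
qed

theorem shanks_identity: "(\<Sum>k\<le>n. shanks_term n k) = (pentagonal_sum n :: 'a::comm_ring_1 fps)"
proof (induction n)
  case 0
  then show ?case by (simp add: shanks_term_def pentagonal_sum_def pent_def)
next
  case (Suc n)
  have "(\<Sum>k\<le>Suc n. shanks_term (Suc n) k)
      = (\<Sum>k\<le>n. shanks_term (Suc n) k - shanks_term n k) + (\<Sum>k\<le>n. shanks_term n k)
        + (shanks_term (Suc n) (Suc n) :: 'a fps)"
    by (simp add: sum_subtractf)
  also have "\<dots> = (-1) ^ Suc n * fps_X ^ (n * Suc n + Suc n * (Suc n + 1) div 2)
        + pentagonal_sum n + shanks_term (Suc n) (Suc n)"
    using sum_shanks_term_diff[of n n] by (simp add: Suc.IH)
  also have "\<dots> = pentagonal_sum (Suc n)"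
    unfolding pentagonal_sum_Suc by (simp add: shanks_term_def algebra_simps)
  finally show ?case .
qed

lemma shanks_term_nth_eq_0:
  "0 < k \<Longrightarrow> d \<le> n \<Longrightarrow> shanks_term n k $ d = (0 :: 'a::comm_ring_1)"
proof -
  assume "0 < k" "d \<le> n"
  then have "d < n * k + k * (k + 1) div 2"
    by (cases k) auto
  moreover have "shanks_term n k = fps_X ^ (n * k + k * (k + 1) div 2) * ((-1) ^ k * qprod k n :: 'a fps)"
    unfolding shanks_term_def by (simp add: algebra_simps)
  ultimately show ?thesis
    by (simp add: fps_X_power_mult_nth)
qed

corollary qprod_nth_eq_pentagonal_sum_nth:
  "d \<le> n \<Longrightarrow> qprod 0 n $ d = (pentagonal_sum n $ d :: 'a::comm_ring_1)"
proof -
  assume "d \<le> n"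
  have "pentagonal_sum n $ d = (\<Sum>k\<le>n. shanks_term n k $ d :: 'a)"
    unfolding shanks_identity[symmetric] fps_sum_nth ..
  also have "\<dots> = shanks_term n 0 $ d + (\<Sum>k\<in>{..n} - {0}. shanks_term n k $ d)"
    by (rule sum.remove) auto
  also have "(\<Sum>k\<in>{..n} - {0}. shanks_term n k $ d) = 0"
    using \<open>d \<le> n\<close> by (intro sum.neutral) (auto simp: shanks_term_nth_eq_0)
  also have "shanks_term n 0 = qprod 0 n"
    by (simp add: shanks_term_def)
  finally show ?thesis by simp
qed

lemma sum_nth_one_minus_X_mult: "(\<Sum>i\<le>d. ((1 - fps_X) * f) $ i) = (f $ d :: 'a::comm_ring_1)"
  by (induction d) (simp_all add: algebra_simps)

lemma sum_pentagonal_sum_nth: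
  "(\<Sum>i\<le>d. pentagonal_sum n $ i)
     = (\<Sum>j\<in>{j \<in> {-int n..int n}. pent j \<le> int d}. (-1) ^ nat \<bar>j\<bar> :: 'a::comm_ring_1)"
proof -
  have nth: "((-1) ^ k * fps_X ^ p :: 'a fps) $ i = (if i = p then (-1) ^ k else 0)" for k p i
    by (cases "even k") simp_all
  have "(\<Sum>i\<le>d. pentagonal_sum n $ i)
      = (\<Sum>j\<in>{-int n..int n}. \<Sum>i\<le>d. if i = nat (pent j) then (-1) ^ nat \<bar>j\<bar> else 0 :: 'a)"
    unfolding pentagonal_sum_def fps_sum_nth by (subst sum.swap) (simp only: nth)
  also have "\<dots> = (\<Sum>j\<in>{-int n..int n}. if pent j \<le> int d then (-1) ^ nat \<bar>j\<bar> else 0)"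
    using pent_nonneg by (intro sum.cong) (auto simp: sum.delta')
  finally show ?thesis
    by (simp only: sum.inter_filter[OF finite_atLeastAtMost_int])
qed

lemma sum_sign_symmetric: "(\<Sum>j\<in>{-int k..int k}. (-1) ^ nat \<bar>j\<bar>) = ((-1) ^ k :: 'a::comm_ring_1)"
proof (induction k)
  case (Suc k)
  have "{-int (Suc k)..int (Suc k)} = insert (int (Suc k)) (insert (- int (Suc k)) {-int k..int k})"
    by auto
  then show ?case using Suc by (simp del: of_nat_Suc)
qed simp

lemma sum_sign_half_open: "(\<Sum>j\<in>{-int k..<int k}. (-1) ^ nat \<bar>j\<bar>) = (0 :: 'a::comm_ring_1)"
proof -
  have "{-int k..int k} = insert (int k) {-int k..<int k}"
    by auto
  then show ?thesis using sum_sign_symmetric[of k, where 'a = 'a] by simp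
qed

lemma sum_sign_pent_less_of_nat: "(\<Sum>j | pent j < pent (int k). (-1) ^ nat \<bar>j\<bar>) = (0 :: 'a::comm_ring_1)"
proof -
  have "{j. pent j < pent (int k)} = {-int k..<int k}"
    by (auto simp: pent_less_pent_iff_nonneg)
  then show ?thesis by (simp only: sum_sign_half_open)
qed

lemma sum_sign_pent_less_uminus:
  "(\<Sum>j | pent j < pent (- int (Suc k)). (-1) ^ nat \<bar>j\<bar>) = ((-1) ^ k :: 'a::comm_ring_1)"
proof -
  have "{j. pent j < pent (- int (Suc k))} = {-int k..int k}"
    by (auto simp: pent_less_pent_iff_neg)
  then show ?thesis by (simp only: sum_sign_symmetric)
qed

lemma b_eq_sum_sign: "1 \<le> n \<Longrightarrow> b n = - (\<Sum>j | pent j < int n. (-1) ^ nat \<bar>j\<bar>)"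
proof -
  assume "1 \<le> n"
  then have "{0<..n} = insert 1 {2..n}" by auto
  then have factor: "qprod 0 n = (1 - fps_X) * (\<Prod>j\<in>{2..n}. 1 - fps_X ^ j :: int fps)"
    unfolding qprod_def by simp
  have "pent j < int n \<Longrightarrow> j \<in> {-int n..int n}" for j
    using abs_le_pent[of j] by auto
  then have window: "{j \<in> {-int n..int n}. pent j \<le> int (n - 1)} = {j. pent j < int n}"
    using \<open>1 \<le> n\<close> by auto
  have "(\<Prod>j\<in>{2..n}. 1 - fps_X ^ j :: int fps) $ (n - 1) = (\<Sum>i\<le>n - 1. qprod 0 n $ i)"
    unfolding factor by (rule sum_nth_one_minus_X_mult[symmetric])
  also have "\<dots> = (\<Sum>i\<le>n - 1. pentagonal_sum n $ i)"
    by (intro sum.cong) (auto intro: qprod_nth_eq_pentagonal_sum_nth)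
  also have "\<dots> = (\<Sum>j | pent j < int n. (-1) ^ nat \<bar>j\<bar>)"
    unfolding sum_pentagonal_sum_nth window ..
  finally show ?thesis
    using \<open>1 \<le> n\<close> unfolding b_def by simp
qed

theorem lemma5p3:
  fixes n :: nat
  assumes "n \<ge> 1"
  shows "(R (ceil_p (int n)) > 0 \<longrightarrow> b n = 0)
       \<and> (R (ceil_p (int n)) < 0 \<and> odd (R (ceil_p (int n))) \<longrightarrow> b n = -1)
       \<and> (R (ceil_p (int n)) < 0 \<and> even (R (ceil_p (int n))) \<longrightarrow> b n = 1)"
proof -
  obtain m where ceil: "ceil_p (int n) = pent m" and below: "{j. pent j < pent m} = {j. pent j < int n}"
    by (rule ceil_p_minimal)
  have b_sum: "b n = - (\<Sum>j | pent j < pent m. (-1) ^ nat \<bar>j\<bar>)"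
    unfolding below using b_eq_sum_sign[OF assms] .
  show ?thesis
  proof (cases m)
    case (nonneg k)
    have "b n = 0"
      using b_sum unfolding nonneg sum_sign_pent_less_of_nat by simp
    then show ?thesis unfolding ceil R_pent nonneg by simp
  next
    case (neg k)
    have "b n = - ((-1) ^ k)"
      using b_sum unfolding neg sum_sign_pent_less_uminus .
    then show ?thesis unfolding ceil R_pent neg by simp
  qed
qed

end
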